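(* Let $p\ge1$, $m\in\mathbb{N}$, $a,b>0$, $\beta\in\mathbb{R}^p$, let $\xi$ be a design on $\mathcal{X}$, and let $G$ be any real $p\times p$ matrix. Then the matrix $\frac{b}{a}G+\frac{m}{a}e_1e_1^T$ is a generalized inverse of $M(\xi;\beta)$ (i.e. $M(\xi;\beta)\bigl(\frac{b}{a}G+\frac{m}{a}e_1e_1^T\bigr)M(\xi;\beta)=M(\xi;\beta)$) if and only if $G$ is a generalized inverse of $M_{Po}(\xi;\beta)$ (i.e. $M_{Po}(\xi;\beta)GM_{Po}(\xi;\beta)=M_{Po}(\xi;\beta)$).
   Context: Let $\mathcal{X}\subseteq\mathbb{R}^k$ be a design region and $f=(1,f_1,\ldots,f_{p-1})^T:\mathcal{X}\to\mathbb{R}^p$ a vector of regression functions whose first component is the constant 1. A design $\xi$ is a probability measure on $\mathcal{X}$ with finite support $x_1,\ldots,x_l$ and weights $w_1,\ldots,w_l\ge0$, $\sum_j w_j=1$. The Poisson information matrix is $M_{Po}(\xi;\beta)=\sum_{j=1}^l w_j\exp(f(x_j)^T\beta)f(x_j)f(x_j)^T$, and the Poisson–Gamma information matrix is $M(\xi;\beta)=\frac{a}{b}\Bigl(M_{Po}(\xi;\beta)-\frac{M_{Po}(\xi;\beta)e_1e_1^TM_{Po}(\xi;\beta)}{e_1^TM_{Po}(\xi;\beta)e_1+b/m}\Bigr)$, where $e_1$ is the first standard unit vector of $\mathbb{R}^p$. *)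

theory Defs
  imports "HOL-Analysis.Analysis"
begin

definition outer :: "real^'p \<Rightarrow> real^'p \<Rightarrow> real^'p^'p" where
  "outer u v = (\<chi> i j. u $ i * v $ j)"

text \<open>Poisson information matrix of the design with support points xs 0..l-1 and
  weights w 0..l-1.\<close>
definition M_Po :: "('x \<Rightarrow> real^'p) \<Rightarrow> nat \<Rightarrow> (nat \<Rightarrow> 'x) \<Rightarrow> (nat \<Rightarrow> real)
    \<Rightarrow> real^'p \<Rightarrow> real^'p^'p" where
  "M_Po f l xs w \<beta> = (\<Sum>j<l. (w j * exp (f (xs j) \<bullet> \<beta>)) *\<^sub>R outer (f (xs j)) (f (xs j)))"

text \<open>Poisson--Gamma information matrix; e1 is the first standard unit vector.\<close>
definition M_PG :: "real \<Rightarrow> real \<Rightarrow> nat \<Rightarrow> real^'p \<Rightarrow> real^'p^'p \<Rightarrow> real^'p^'p" where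
  "M_PG a b m e1 MP = (a / b) *\<^sub>R
     (MP - (1 / (e1 \<bullet> (MP *v e1) + b / real m)) *\<^sub>R (MP ** outer e1 e1 ** MP))"

end

theory Submission
  imports Defs
begin

text \<open>Write \<open>P\<close> for \<open>M_Po\<close>, \<open>E = e\<^sub>1 e\<^sub>1\<^sup>T\<close>, \<open>\<alpha> = e\<^sub>1\<^sup>T P e\<^sub>1\<close>, \<open>d = b/m\<close> and \<open>s = 1/(\<alpha> + d)\<close>,
  so that \<open>M = (a/b) Q\<close> with \<open>Q = P - s P E P\<close> and the candidate inverse is \<open>(b/a)(G + E/d)\<close>.
  Since \<open>E P E = \<alpha> E\<close>, the matrix \<open>Q\<close> factors as \<open>Q = A P = P B\<close> with
  \<open>A = I - s P E\<close> and \<open>B = I - s E P\<close>, both invertible because \<open>s \<alpha> \<noteq> 1\<close>, and a short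
  computation gives \<open>Q G Q + Q E Q / d - Q = A (P G P - P) B\<close>.\<close>

lemma matrix_add_rdistrib: "((A::real^'n^'m) + B) ** (C::real^'k^'n) = A ** C + B ** C"
  by (vector matrix_matrix_mult_def sum.distrib[symmetric] field_simps)

lemma matrix_diff_ldistrib: "(A::real^'n^'m) ** ((B::real^'k^'n) - C) = A ** B - A ** C"
  by (vector matrix_matrix_mult_def sum_subtractf[symmetric] field_simps)

lemma matrix_diff_rdistrib: "((A::real^'n^'m) - B) ** (C::real^'k^'n) = A ** C - B ** C"
  by (vector matrix_matrix_mult_def sum_subtractf[symmetric] field_simps)

lemma matrix_scaleR_right: "(A::real^'n^'m) ** (k *\<^sub>R (B::real^'k^'n)) = k *\<^sub>R (A ** B)"
  by (simp add: matrix_scalar_ac scalar_matrix_assoc)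

lemma matrix_two_mult: "(2::real^'n^'m) * X = (2::real) *\<^sub>R X"
  unfolding scaleR_2 by (rule mult_2)

lemmas matrix_ring_simps = matrix_add_ldistrib matrix_add_rdistrib matrix_diff_ldistrib
  matrix_diff_rdistrib scalar_matrix_assoc[symmetric] matrix_scaleR_right matrix_mul_assoc matrix_two_mult

lemma matrix_mult_diff_mult:
  fixes A X Y B :: "real^'n^'n"
  shows "A ** (X - Y) ** B = A ** X ** B - A ** Y ** B"
  by (simp only: matrix_diff_ldistrib matrix_diff_rdistrib)

lemma outer_mult_mult_outer:
  fixes u v x y :: "real^'n" and P :: "real^'n^'n"
  shows "outer u v ** P ** outer x y = (v \<bullet> (P *v x)) *\<^sub>R outer u y"
proof -
  have "v \<bullet> (P *v x) = (\<Sum>l\<in>UNIV. \<Sum>k\<in>UNIV. v $ l * P $ l $ k * x $ k)"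
    by (simp add: inner_vec_def matrix_vector_mult_def sum_distrib_left mult.assoc)
  also have "\<dots> = (\<Sum>k\<in>UNIV. \<Sum>l\<in>UNIV. v $ l * P $ l $ k * x $ k)"
    by (rule sum.swap)
  finally have vPx: "v \<bullet> (P *v x) = \<dots>" .
  have "(outer u v ** P ** outer x y) $ i $ j
      = (\<Sum>k\<in>UNIV. \<Sum>l\<in>UNIV. u $ i * y $ j * (v $ l * P $ l $ k * x $ k))" for i j
    by (simp add: matrix_matrix_mult_def outer_def sum_distrib_left sum_distrib_right mult_ac)
  moreover have "outer u y $ i $ j = u $ i * y $ j" for i j
    by (simp add: outer_def)
  ultimately show ?thesis
    by (simp add: vec_eq_iff vPx sum_distrib_left sum_distrib_right mult_ac)
qed

lemma invertible_mult_mult_eq_0_iff: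
  fixes A B X :: "real^'n^'n"
  assumes "invertible A" "invertible B"
  shows "A ** X ** B = 0 \<longleftrightarrow> X = 0"
proof
  assume "A ** X ** B = 0"
  obtain A' B' where "A' ** A = mat 1" "B ** B' = mat 1"
    using assms invertible_def by blast
  then have "X = A' ** (A ** X ** B) ** B'"
    by (metis matrix_mul_assoc matrix_mul_lid matrix_mul_rid)
  with \<open>A ** X ** B = 0\<close> show "X = 0" by simp
qed simp

lemma invertible_one_minus_scaleR:
  fixes X :: "real^'n^'n"
  assumes XX: "X ** X = \<alpha> *\<^sub>R X" and "s * \<alpha> \<noteq> 1"
  shows "invertible (mat 1 - s *\<^sub>R X)"
proof -
  define c where "c = s / (1 - s * \<alpha>)"
  have c: "c - s - s * c * \<alpha> = 0"
    using \<open>s * \<alpha> \<noteq> 1\<close> by (simp add: c_def field_simps)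
  have "(mat 1 - s *\<^sub>R X) ** (mat 1 + c *\<^sub>R X) = mat 1 + (c - s - s * c * \<alpha>) *\<^sub>R X"
    "(mat 1 + c *\<^sub>R X) ** (mat 1 - s *\<^sub>R X) = mat 1 + (c - s - s * c * \<alpha>) *\<^sub>R X"
    by (simp_all add: matrix_ring_simps XX algebra_simps)
  then show ?thesis
    unfolding invertible_def c by auto
qed

lemma rank_one_downdate_factorization:
  fixes P G E :: "real^'n^'n"
  assumes EE: "E ** E = E" and EPE: "E ** P ** E = \<alpha> *\<^sub>R E" and s: "s * (\<alpha> + d) = 1"
  defines "Q \<equiv> P - s *\<^sub>R (P ** E ** P)"
  shows "Q ** G ** Q + (1 / d) *\<^sub>R (Q ** E ** Q) - Q
    = (mat 1 - s *\<^sub>R (P ** E)) ** (P ** G ** P - P) ** (mat 1 - s *\<^sub>R (E ** P))"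
proof -
  have EPE': "X ** E ** P ** E = \<alpha> *\<^sub>R (X ** E)" for X :: "real^'n^'n"
    by (metis EPE matrix_mul_assoc matrix_scaleR_right)
  have EE': "X ** E ** E = X ** E" for X :: "real^'n^'n"
    by (metis EE matrix_mul_assoc)
  have "Q = (mat 1 - s *\<^sub>R (P ** E)) ** P" "Q = P ** (mat 1 - s *\<^sub>R (E ** P))"
    by (simp_all add: Q_def matrix_ring_simps)
  then have QGQ: "Q ** G ** Q = (mat 1 - s *\<^sub>R (P ** E)) ** (P ** G ** P) ** (mat 1 - s *\<^sub>R (E ** P))"
    by (metis matrix_mul_assoc)
  have "Q ** E ** Q = ((1 - s * \<alpha>)\<^sup>2) *\<^sub>R (P ** E ** P)"
    by (simp add: Q_def matrix_ring_simps EPE' EE' algebra_simps power2_eq_square)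
  moreover have "1 - s * \<alpha> = s * d"
    using s by (simp add: algebra_simps)
  ultimately have QEQ: "(1 / d) *\<^sub>R (Q ** E ** Q) = (s * (s * d)) *\<^sub>R (P ** E ** P)"
    by (cases "d = 0") (simp_all add: power2_eq_square)
  have APB: "(mat 1 - s *\<^sub>R (P ** E)) ** P ** (mat 1 - s *\<^sub>R (E ** P))
      = P + (s * s * \<alpha> - 2 * s) *\<^sub>R (P ** E ** P)"
    by (simp add: matrix_ring_simps EPE' algebra_simps)
  have "s * (s * (\<alpha> + d)) = s"
    using s by simp
  then have coeff: "s * (s * d) = s - s * s * \<alpha>"
    by (simp add: algebra_simps)
  have "Q ** G ** Q + (1 / d) *\<^sub>R (Q ** E ** Q) - Q
      = Q ** G ** Q + (s * (s * d)) *\<^sub>R (P ** E ** P) - (P - s *\<^sub>R (P ** E ** P))"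
    by (simp only: QEQ) (simp only: Q_def)
  also have "\<dots> = Q ** G ** Q - (P + (s * s * \<alpha> - 2 * s) *\<^sub>R (P ** E ** P))"
    unfolding coeff by (simp add: algebra_simps matrix_two_mult)
  also have "\<dots> = (mat 1 - s *\<^sub>R (P ** E)) ** (P ** G ** P - P) ** (mat 1 - s *\<^sub>R (E ** P))"
    unfolding QGQ APB[symmetric] by (rule matrix_mult_diff_mult[symmetric])
  finally show ?thesis .
qed

lemma rank_one_downdate_ginverse_iff:
  fixes P G E :: "real^'n^'n"
  assumes EE: "E ** E = E" and EPE: "E ** P ** E = \<alpha> *\<^sub>R E" and "d \<noteq> 0" "\<alpha> + d \<noteq> 0"
  defines "Q \<equiv> P - (1 / (\<alpha> + d)) *\<^sub>R (P ** E ** P)"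
  shows "Q ** G ** Q + (1 / d) *\<^sub>R (Q ** E ** Q) = Q \<longleftrightarrow> P ** G ** P = P"
proof -
  define s where "s = 1 / (\<alpha> + d)"
  have s: "s * (\<alpha> + d) = 1"
    using \<open>\<alpha> + d \<noteq> 0\<close> by (simp add: s_def)
  then have "s * \<alpha> \<noteq> 1"
    using \<open>d \<noteq> 0\<close> by (auto simp: algebra_simps)
  moreover have "(P ** E) ** (P ** E) = \<alpha> *\<^sub>R (P ** E)" "(E ** P) ** (E ** P) = \<alpha> *\<^sub>R (E ** P)"
    by (metis EPE matrix_mul_assoc matrix_scaleR_right scalar_matrix_assoc)+
  ultimately have inv: "invertible (mat 1 - s *\<^sub>R (P ** E))" "invertible (mat 1 - s *\<^sub>R (E ** P))"
    by (auto intro: invertible_one_minus_scaleR)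
  have "Q ** G ** Q + (1 / d) *\<^sub>R (Q ** E ** Q) = Q
      \<longleftrightarrow> Q ** G ** Q + (1 / d) *\<^sub>R (Q ** E ** Q) - Q = 0"
    by simp
  also have "\<dots> \<longleftrightarrow> (mat 1 - s *\<^sub>R (P ** E)) ** (P ** G ** P - P) ** (mat 1 - s *\<^sub>R (E ** P)) = 0"
    unfolding Q_def s_def[symmetric] rank_one_downdate_factorization[OF EE EPE s] ..
  also have "\<dots> \<longleftrightarrow> P ** G ** P = P"
    using invertible_mult_mult_eq_0_iff[OF inv] by simp
  finally show ?thesis .
qed

lemma inner_axis_matrix_vector_axis:
  fixes P :: "real^'n^'n"
  shows "axis i 1 \<bullet> (P *v axis i 1) = P $ i $ i"
  by (simp add: inner_vec_def matrix_vector_mult_def axis_def if_distrib if_distribR cong: if_cong)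

lemma M_Po_diag_nonneg:
  assumes "\<forall>j<l. w j \<ge> 0"
  shows "M_Po f l xs w \<beta> $ i $ i \<ge> 0"
  using assms by (auto simp: M_Po_def outer_def zero_le_mult_iff intro!: sum_nonneg)

theorem lemma2:
  fixes X :: "(real^'k) set"
    and f :: "real^'k \<Rightarrow> real^'p"
    and i1 :: 'p
    and l m :: nat
    and xs :: "nat \<Rightarrow> real^'k"
    and w :: "nat \<Rightarrow> real"
    and a b :: real
    and \<beta> :: "real^'p"
    and G :: "real^'p^'p"
  assumes f_const: "\<forall>x\<in>X. f x $ i1 = 1"
    and supp: "\<forall>j<l. xs j \<in> X"
    and w_nonneg: "\<forall>j<l. w j \<ge> 0"
    and w_sum: "(\<Sum>j<l. w j) = 1"
    and m_pos: "m \<ge> 1"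
    and a_pos: "a > 0" and b_pos: "b > 0"
  shows "(let MP = M_Po f l xs w \<beta>; e1 = axis i1 1; M = M_PG a b m e1 MP;
              H = (b / a) *\<^sub>R G + (real m / a) *\<^sub>R outer e1 e1
          in (M ** H ** M = M \<longleftrightarrow> MP ** G ** MP = MP))"
proof -
  define P e where "P = M_Po f l xs w \<beta>" and "e = (axis i1 1 :: real^'p)"
  define E \<alpha> d where "E = outer e e" and "\<alpha> = e \<bullet> (P *v e)" and "d = b / real m"
  define Q where "Q = P - (1 / (\<alpha> + d)) *\<^sub>R (P ** E ** P)"
  have EE: "E ** E = E"
    using outer_mult_mult_outer[of e e "mat 1" e e] by (simp add: E_def e_def inner_axis_axis)
  have EPE: "E ** P ** E = \<alpha> *\<^sub>R E"
    unfolding E_def \<alpha>_def by (rule outer_mult_mult_outer)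
  \<comment> \<open>Of the hypotheses on the design only \<open>w_nonneg\<close> matters: it gives \<open>\<alpha> = P\<^sub>1\<^sub>1 \<ge> 0\<close>.\<close>
  have "\<alpha> \<ge> 0" "d > 0"
    using M_Po_diag_nonneg[OF w_nonneg] m_pos b_pos
    by (simp_all add: \<alpha>_def e_def P_def d_def inner_axis_matrix_vector_axis)
  then have iff: "Q ** G ** Q + (1 / d) *\<^sub>R (Q ** E ** Q) = Q \<longleftrightarrow> P ** G ** P = P"
    unfolding Q_def by (intro rank_one_downdate_ginverse_iff[OF EE EPE]) auto
  have M: "M_PG a b m e P = (a / b) *\<^sub>R Q"
    by (simp add: M_PG_def Q_def \<alpha>_def d_def E_def)
  have "M_PG a b m e P ** ((b / a) *\<^sub>R G + (real m / a) *\<^sub>R E) ** M_PG a b m e P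
      = (a / b) *\<^sub>R (Q ** G ** Q + (1 / d) *\<^sub>R (Q ** E ** Q))"
    unfolding M using a_pos b_pos m_pos by (simp add: matrix_ring_simps d_def)
  with iff a_pos b_pos show ?thesis
    unfolding Let_def P_def[symmetric] e_def[symmetric] E_def[symmetric] M by simp
qed

end
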